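(* Let $\mathfrak{g}$ be a $\mathrm{Lie}$-nilpotent Leibniz algebra of class $k\ge2$ and let $0\to\mathfrak{r}\to\mathfrak{f}\to\mathfrak{g}\to0$ be a free presentation of $\mathfrak{g}$. Then there is a natural exact sequence $$0\to\frac{\mathfrak{f}^{[k+1]}}{[\mathfrak{f},\mathfrak{r}]_{\mathrm{Lie}}\cap\mathfrak{f}^{[k+1]}}\to\mathcal{M}^{\mathrm{Lie}}(\mathfrak{g})\to\mathcal{M}^{\mathrm{Lie}}\big(\mathfrak{g}/\mathfrak{g}^{[k]}\big)\to\mathfrak{g}^{[k]}\to0.$$
   Context: Fix a field $\mathbb{K}$ with $\frac12\in\mathbb{K}$. A Leibniz algebra is a $\mathbb{K}$-vector space with a bilinear bracket satisfying $[x,[y,z]]=[[x,y],z]-[[x,z],y]$. For two-sided ideals $\mathfrak{m},\mathfrak{n}$, $[\mathfrak{m},\mathfrak{n}]_{\mathrm{Lie}}$ is the subspace spanned by all $[m,n]+[n,m]$. The lower $\mathrm{Lie}$-central series of a Leibniz algebra $\mathfrak{h}$ is $\mathfrak{h}^{[1]}=\mathfrak{h}$, $\mathfrak{h}^{[i]}=[\mathfrak{h}^{[i-1]},\mathfrak{h}]_{\mathrm{Lie}}$; $\mathfrak{h}$ is $\mathrm{Lie}$-nilpotent of class $k$ if $\mathfrak{h}^{[k+1]}=0$ and $\mathfrak{h}^{[k]}\neq0$. A free presentation is $0\to\mathfrak{r}\to\mathfrak{f}\to\mathfrak{g}\to0$ with $\mathfrak{f}$ free Leibniz. The Schur $\mathrm{Lie}$-multiplier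 is $\mathcal{M}^{\mathrm{Lie}}(\mathfrak{g})=\frac{\mathfrak{r}\cap[\mathfrak{f},\mathfrak{f}]_{\mathrm{Lie}}}{[\mathfrak{f},\mathfrak{r}]_{\mathrm{Lie}}}$, independent of the presentation up to isomorphism. *)

theory Defs
  imports Main
begin

record ('k, 'v) leib =
  lcar  :: "'v set"
  ladd  :: "'v \<Rightarrow> 'v \<Rightarrow> 'v"
  lzero :: "'v"
  lneg  :: "'v \<Rightarrow> 'v"
  lsmul :: "'k \<Rightarrow> 'v \<Rightarrow> 'v"
  lbr   :: "'v \<Rightarrow> 'v \<Rightarrow> 'v"

definition leibniz_algebra :: "('k::field, 'v) leib \<Rightarrow> bool" where
  "leibniz_algebra L \<longleftrightarrow>
     lzero L \<in> lcar L \<and>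
     (\<forall>x\<in>lcar L. \<forall>y\<in>lcar L. ladd L x y \<in> lcar L) \<and>
     (\<forall>x\<in>lcar L. lneg L x \<in> lcar L) \<and>
     (\<forall>a. \<forall>x\<in>lcar L. lsmul L a x \<in> lcar L) \<and>
     (\<forall>x\<in>lcar L. \<forall>y\<in>lcar L. lbr L x y \<in> lcar L) \<and>
     (\<forall>x\<in>lcar L. \<forall>y\<in>lcar L. \<forall>z\<in>lcar L. ladd L (ladd L x y) z = ladd L x (ladd L y z)) \<and>
     (\<forall>x\<in>lcar L. \<forall>y\<in>lcar L. ladd L x y = ladd L y x) \<and>
     (\<forall>x\<in>lcar L. ladd L x (lzero L) = x) \<and>
     (\<forall>x\<in>lcar L. ladd L x (lneg L x) = lzero L) \<and>
     (\<forall>a b. \<forall>x\<in>lcar L. lsmul L (a + b) x = ladd L (lsmul L a x) (lsmul L b x)) \<and>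
     (\<forall>a. \<forall>x\<in>lcar L. \<forall>y\<in>lcar L. lsmul L a (ladd L x y) = ladd L (lsmul L a x) (lsmul L a y)) \<and>
     (\<forall>a b. \<forall>x\<in>lcar L. lsmul L (a * b) x = lsmul L a (lsmul L b x)) \<and>
     (\<forall>x\<in>lcar L. lsmul L 1 x = x) \<and>
     (\<forall>x\<in>lcar L. \<forall>y\<in>lcar L. \<forall>z\<in>lcar L. lbr L (ladd L x y) z = ladd L (lbr L x z) (lbr L y z)) \<and>
     (\<forall>x\<in>lcar L. \<forall>y\<in>lcar L. \<forall>z\<in>lcar L. lbr L x (ladd L y z) = ladd L (lbr L x y) (lbr L x z)) \<and>
     (\<forall>a. \<forall>x\<in>lcar L. \<forall>y\<in>lcar L. lbr L (lsmul L a x) y = lsmul L a (lbr L x y)) \<and>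
     (\<forall>a. \<forall>x\<in>lcar L. \<forall>y\<in>lcar L. lbr L x (lsmul L a y) = lsmul L a (lbr L x y)) \<and>
     \<comment> \<open>Leibniz identity  [x,[y,z]] = [[x,y],z] - [[x,z],y]\<close>
     (\<forall>x\<in>lcar L. \<forall>y\<in>lcar L. \<forall>z\<in>lcar L.
        lbr L x (lbr L y z) = ladd L (lbr L (lbr L x y) z) (lneg L (lbr L (lbr L x z) y)))"

definition leib_hom :: "('k::field, 'v) leib \<Rightarrow> ('k, 'w) leib \<Rightarrow> ('v \<Rightarrow> 'w) \<Rightarrow> bool" where
  "leib_hom L M h \<longleftrightarrow>
     h ` lcar L \<subseteq> lcar M \<and>
     (\<forall>x\<in>lcar L. \<forall>y\<in>lcar L. h (ladd L x y) = ladd M (h x) (h y)) \<and>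
     (\<forall>a. \<forall>x\<in>lcar L. h (lsmul L a x) = lsmul M a (h x)) \<and>
     (\<forall>x\<in>lcar L. \<forall>y\<in>lcar L. h (lbr L x y) = lbr M (h x) (h y))"

text \<open>Freeness by the universal property, tested against all Leibniz algebras whose
  underlying type is the same as that of the candidate free algebra.\<close>
definition free_on :: "('k::field, 'v) leib \<Rightarrow> 'v set \<Rightarrow> bool" where
  "free_on L X \<longleftrightarrow> leibniz_algebra L \<and> X \<subseteq> lcar L \<and>
     (\<forall>(M :: ('k, 'v) leib) \<phi>. leibniz_algebra M \<and> \<phi> ` X \<subseteq> lcar M \<longrightarrow>
        (\<exists>h. leib_hom L M h \<and> (\<forall>x\<in>X. h x = \<phi> x)) \<and>
        (\<forall>h1 h2. leib_hom L M h1 \<and> leib_hom L M h2 \<and> (\<forall>x\<in>X. h1 x = \<phi> x) \<and> (\<forall>x\<in>X. h2 x = \<phi> x)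
            \<longrightarrow> (\<forall>y\<in>lcar L. h1 y = h2 y)))"

definition free_leib :: "('k::field, 'v) leib \<Rightarrow> bool" where
  "free_leib L \<longleftrightarrow> (\<exists>X. free_on L X)"

definition lsubspace :: "('k::field, 'v) leib \<Rightarrow> 'v set \<Rightarrow> bool" where
  "lsubspace L W \<longleftrightarrow> W \<subseteq> lcar L \<and> lzero L \<in> W \<and>
     (\<forall>x\<in>W. \<forall>y\<in>W. ladd L x y \<in> W) \<and> (\<forall>a. \<forall>x\<in>W. lsmul L a x \<in> W)"

definition lspan :: "('k::field, 'v) leib \<Rightarrow> 'v set \<Rightarrow> 'v set" where
  "lspan L S = \<Inter>{W. lsubspace L W \<and> S \<subseteq> W}"

definition lideal :: "('k::field, 'v) leib \<Rightarrow> 'v set \<Rightarrow> bool" where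
  "lideal L I \<longleftrightarrow> lsubspace L I \<and>
     (\<forall>x\<in>lcar L. \<forall>i\<in>I. lbr L x i \<in> I \<and> lbr L i x \<in> I)"

definition lie_br :: "('k::field, 'v) leib \<Rightarrow> 'v set \<Rightarrow> 'v set \<Rightarrow> 'v set" where
  "lie_br L M N = lspan L {ladd L (lbr L m n) (lbr L n m) | m n. m \<in> M \<and> n \<in> N}"

fun lcs0 :: "('k::field, 'v) leib \<Rightarrow> nat \<Rightarrow> 'v set" where
  "lcs0 L 0 = lcar L"
| "lcs0 L (Suc n) = lie_br L (lcs0 L n) (lcar L)"

text \<open>\<open>lie_lcs L i\<close> is \<open>L^[i]\<close> (for \<open>i \<ge> 1\<close>): \<open>L^[1] = L\<close>, \<open>L^[i] = [L^[i-1], L]_Lie\<close>.\<close>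
definition lie_lcs :: "('k::field, 'v) leib \<Rightarrow> nat \<Rightarrow> 'v set" where
  "lie_lcs L i = lcs0 L (i - 1)"

definition lie_nilpotent_class :: "('k::field, 'v) leib \<Rightarrow> nat \<Rightarrow> bool" where
  "lie_nilpotent_class L k \<longleftrightarrow> lie_lcs L (k + 1) = {lzero L} \<and> lie_lcs L k \<noteq> {lzero L}"

definition lcoset :: "('k::field, 'v) leib \<Rightarrow> 'v set \<Rightarrow> 'v \<Rightarrow> 'v set" where
  "lcoset L B x = {ladd L x b | b. b \<in> B}"

definition lquot :: "('k::field, 'v) leib \<Rightarrow> 'v set \<Rightarrow> 'v set \<Rightarrow> 'v set set" where
  "lquot L A B = lcoset L B ` A"

definition quot_alg :: "('k::field, 'v) leib \<Rightarrow> 'v set \<Rightarrow> ('k, 'v set) leib" where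
  "quot_alg L I =
     \<lparr> lcar = lquot L (lcar L) I,
       ladd = (\<lambda>C D. lcoset L I (ladd L (SOME x. x \<in> C) (SOME y. y \<in> D))),
       lzero = lcoset L I (lzero L),
       lneg = (\<lambda>C. lcoset L I (lneg L (SOME x. x \<in> C))),
       lsmul = (\<lambda>a C. lcoset L I (lsmul L a (SOME x. x \<in> C))),
       lbr = (\<lambda>C D. lcoset L I (lbr L (SOME x. x \<in> C) (SOME y. y \<in> D))) \<rparr>"

definition lkernel :: "('k::field, 'v) leib \<Rightarrow> ('k, 'w) leib \<Rightarrow> ('v \<Rightarrow> 'w) \<Rightarrow> 'v set" where
  "lkernel F G \<pi> = {x \<in> lcar F. \<pi> x = lzero G}"

definition free_presentation :: "('k::field, 'v) leib \<Rightarrow> ('k, 'w) leib \<Rightarrow> ('v \<Rightarrow> 'w) \<Rightarrow> bool" where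
  "free_presentation F G \<pi> \<longleftrightarrow> leibniz_algebra F \<and> free_leib F \<and> leibniz_algebra G \<and>
     leib_hom F G \<pi> \<and> \<pi> ` lcar F = lcar G"

definition schur_lie :: "('k::field, 'v) leib \<Rightarrow> ('k, 'w) leib \<Rightarrow> ('v \<Rightarrow> 'w) \<Rightarrow> 'v set set" where
  "schur_lie F G \<pi> =
     lquot F (lkernel F G \<pi> \<inter> lie_br F (lcar F) (lcar F)) (lie_br F (lcar F) (lkernel F G \<pi>))"

end

theory Submission
  imports Defs
begin

text \<open>Write \<open>f\<close> for the free algebra, \<open>r = ker \<pi>\<close> and \<open>N = f^[k]\<close>. Then \<open>\<pi>(N) = g^[k]\<close>, and
  \<open>[N,f]_Lie = f^[k+1]\<close> lies in \<open>r\<close> because \<open>g^[k+1] = 0\<close>. Composing \<open>\<pi>\<close> with the quotient map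
  presents \<open>g/g^[k]\<close> with relation ideal \<open>s = \<pi>\<^sup>-\<^sup>1(g^[k]) = N + r\<close>; as \<open>[x,y] + [y,x]\<close> is
  symmetric in \<open>x, y\<close>, this gives \<open>[f,s]_Lie = f^[k+1] + [f,r]_Lie \<subseteq> r\<close>. The three maps are
  induced by the identity of \<open>f\<close> and by \<open>\<pi>\<close>, and their exactness is coset bookkeeping with these
  inclusions; surjectivity onto \<open>g^[k]\<close> uses \<open>f^[k] \<subseteq> [f,f]_Lie\<close>, i.e. \<open>k \<ge> 2\<close>.\<close>

locale leibniz =
  fixes L :: "('k::field, 'v) leib"
  assumes leibniz_algebra: "leibniz_algebra L"
begin

lemma
  shows zero_closed [simp]: "lzero L \<in> lcar L"
    and add_closed [simp]: "\<lbrakk>x \<in> lcar L; y \<in> lcar L\<rbrakk> \<Longrightarrow> ladd L x y \<in> lcar L"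
    and neg_closed [simp]: "x \<in> lcar L \<Longrightarrow> lneg L x \<in> lcar L"
    and smul_closed [simp]: "x \<in> lcar L \<Longrightarrow> lsmul L a x \<in> lcar L"
    and bracket_closed [simp]: "\<lbrakk>x \<in> lcar L; y \<in> lcar L\<rbrakk> \<Longrightarrow> lbr L x y \<in> lcar L"
    and add_zero [simp]: "x \<in> lcar L \<Longrightarrow> ladd L x (lzero L) = x"
    and add_neg [simp]: "x \<in> lcar L \<Longrightarrow> ladd L x (lneg L x) = lzero L"
    and smul_one [simp]: "x \<in> lcar L \<Longrightarrow> lsmul L 1 x = x"
    and smul_add_scalar: "x \<in> lcar L \<Longrightarrow> lsmul L (a + b) x = ladd L (lsmul L a x) (lsmul L b x)"
    and smul_smul: "x \<in> lcar L \<Longrightarrow> lsmul L (a * b) x = lsmul L a (lsmul L b x)"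
  using leibniz_algebra unfolding leibniz_algebra_def by auto

lemma
  assumes "x \<in> lcar L" "y \<in> lcar L"
  shows add_commute: "ladd L x y = ladd L y x"
    and smul_add: "lsmul L a (ladd L x y) = ladd L (lsmul L a x) (lsmul L a y)"
    and bracket_smul_left: "lbr L (lsmul L a x) y = lsmul L a (lbr L x y)"
    and bracket_smul_right: "lbr L x (lsmul L a y) = lsmul L a (lbr L x y)"
  using assms leibniz_algebra unfolding leibniz_algebra_def by auto

lemma
  assumes "x \<in> lcar L" "y \<in> lcar L" "z \<in> lcar L"
  shows add_assoc: "ladd L (ladd L x y) z = ladd L x (ladd L y z)"
    and bracket_add_left: "lbr L (ladd L x y) z = ladd L (lbr L x z) (lbr L y z)"
    and bracket_add_right: "lbr L x (ladd L y z) = ladd L (lbr L x y) (lbr L x z)"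
    and leibniz_identity:
      "lbr L x (lbr L y z) = ladd L (lbr L (lbr L x y) z) (lneg L (lbr L (lbr L x z) y))"
  using assms leibniz_algebra unfolding leibniz_algebra_def by auto

lemma zero_add [simp]: "x \<in> lcar L \<Longrightarrow> ladd L (lzero L) x = x"
  using add_commute[of "lzero L" x] by simp

lemma neg_add [simp]: "x \<in> lcar L \<Longrightarrow> ladd L (lneg L x) x = lzero L"
  using add_commute[of "lneg L x" x] by simp

lemma add_left_commute:
  "\<lbrakk>x \<in> lcar L; y \<in> lcar L; z \<in> lcar L\<rbrakk> \<Longrightarrow> ladd L x (ladd L y z) = ladd L y (ladd L x z)"
  by (metis add_assoc add_commute)

lemma add_add_swap:
  "\<lbrakk>a \<in> lcar L; b \<in> lcar L; c \<in> lcar L; d \<in> lcar L\<rbrakk> \<Longrightarrow>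
   ladd L (ladd L a b) (ladd L c d) = ladd L (ladd L a c) (ladd L b d)"
  by (simp add: add_assoc add_left_commute)

lemma add_left_cancel:
  assumes "x \<in> lcar L" "y \<in> lcar L" "z \<in> lcar L" "ladd L x y = ladd L x z"
  shows "y = z"
proof -
  have "y = ladd L (ladd L (lneg L x) x) y"
    using assms by simp
  also have "\<dots> = ladd L (lneg L x) (ladd L x z)"
    using assms by (simp only: add_assoc neg_closed)
  also have "\<dots> = z"
    using assms by (simp flip: add_assoc)
  finally show ?thesis .
qed

lemma add_neg_cancel_left: "\<lbrakk>x \<in> lcar L; y \<in> lcar L\<rbrakk> \<Longrightarrow> ladd L y (ladd L x (lneg L y)) = x"
  using add_left_commute[of y x "lneg L y"] by simp

lemma add_neg_cancel_right: "\<lbrakk>x \<in> lcar L; y \<in> lcar L\<rbrakk> \<Longrightarrow> ladd L (ladd L y x) (lneg L y) = x"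
  using add_commute[of y x] add_assoc[of x y "lneg L y"] by simp

lemma smul_zero_scalar [simp]:
  assumes "x \<in> lcar L"
  shows "lsmul L 0 x = lzero L"
proof (rule add_left_cancel)
  show "ladd L (lsmul L 0 x) (lsmul L 0 x) = ladd L (lsmul L 0 x) (lzero L)"
    using assms smul_add_scalar[of x 0 0] by simp
qed (use assms in simp_all)

lemma smul_zero [simp]: "lsmul L a (lzero L) = lzero L"
  using smul_smul[of "lzero L" a 0] by simp

lemma neg_unique: "\<lbrakk>x \<in> lcar L; y \<in> lcar L; ladd L x y = lzero L\<rbrakk> \<Longrightarrow> y = lneg L x"
  using add_left_cancel[of x y "lneg L x"] by simp

lemma smul_minus_one: "x \<in> lcar L \<Longrightarrow> lsmul L (-1) x = lneg L x"
  using smul_add_scalar[of x 1 "-1"] by (intro neg_unique) simp_all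

lemma neg_add_distrib:
  "\<lbrakk>x \<in> lcar L; y \<in> lcar L\<rbrakk> \<Longrightarrow> lneg L (ladd L x y) = ladd L (lneg L x) (lneg L y)"
  using smul_add[of x y "-1"] by (simp add: smul_minus_one)

lemma bracket_zero_left [simp]: "x \<in> lcar L \<Longrightarrow> lbr L (lzero L) x = lzero L"
  using bracket_smul_left[of "lzero L" x 0] by simp

lemma bracket_zero_right [simp]: "x \<in> lcar L \<Longrightarrow> lbr L x (lzero L) = lzero L"
  using bracket_smul_right[of x "lzero L" 0] by simp

section \<open>Subspaces, spans and cosets\<close>

lemma lsubspace_subset: "lsubspace L W \<Longrightarrow> W \<subseteq> lcar L"
  and lsubspace_zero: "lsubspace L W \<Longrightarrow> lzero L \<in> W"
  and lsubspace_add: "\<lbrakk>lsubspace L W; x \<in> W; y \<in> W\<rbrakk> \<Longrightarrow> ladd L x y \<in> W"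
  and lsubspace_smul: "\<lbrakk>lsubspace L W; x \<in> W\<rbrakk> \<Longrightarrow> lsmul L a x \<in> W"
  unfolding lsubspace_def by blast+

lemma lsubspace_neg: "\<lbrakk>lsubspace L W; x \<in> W\<rbrakk> \<Longrightarrow> lneg L x \<in> W"
  using lsubspace_smul[of W x "-1"] smul_minus_one[of x] lsubspace_subset[of W] by auto

lemma lsubspace_lcar: "lsubspace L (lcar L)"
  unfolding lsubspace_def by auto

lemma lsubspace_Int: "\<lbrakk>lsubspace L A; lsubspace L B\<rbrakk> \<Longrightarrow> lsubspace L (A \<inter> B)"
  unfolding lsubspace_def by auto

lemma lspan_least: "\<lbrakk>lsubspace L W; S \<subseteq> W\<rbrakk> \<Longrightarrow> lspan L S \<subseteq> W"
  unfolding lspan_def by blast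

lemma lspan_superset: "S \<subseteq> lspan L S"
  unfolding lspan_def by blast

lemma lsubspace_lspan:
  assumes "S \<subseteq> lcar L"
  shows "lsubspace L (lspan L S)"
proof -
  let ?W = "{W. lsubspace L W \<and> S \<subseteq> W}"
  have lcar: "lcar L \<in> ?W"
    using lsubspace_lcar assms by blast
  have "lsubspace L (\<Inter>?W)"
    unfolding lsubspace_def[of L "\<Inter>?W"]
  proof (intro conjI ballI allI)
    show "\<Inter>?W \<subseteq> lcar L"
      using lcar by (rule Inter_lower)
    show "lzero L \<in> \<Inter>?W"
      by (blast intro: lsubspace_zero)
  next
    fix x y assume "x \<in> \<Inter>?W" "y \<in> \<Inter>?W"
    then show "ladd L x y \<in> \<Inter>?W"
      by (blast intro: lsubspace_add)
  next
    fix a x assume "x \<in> \<Inter>?W"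
    then show "lsmul L a x \<in> \<Inter>?W"
      by (blast intro: lsubspace_smul)
  qed
  then show ?thesis
    unfolding lspan_def .
qed

lemma lspan_induct:
  assumes x: "x \<in> lspan L S" and S: "S \<subseteq> lcar L"
    and generator: "\<And>s. s \<in> S \<Longrightarrow> P s" and zero: "P (lzero L)"
    and add: "\<And>x y. \<lbrakk>x \<in> lcar L; y \<in> lcar L; P x; P y\<rbrakk> \<Longrightarrow> P (ladd L x y)"
    and smul: "\<And>a x. \<lbrakk>x \<in> lcar L; P x\<rbrakk> \<Longrightarrow> P (lsmul L a x)"
  shows "P x"
proof -
  let ?W = "{x \<in> lspan L S. P x}"
  have span: "lsubspace L (lspan L S)"
    using S by (rule lsubspace_lspan)
  have sub: "x \<in> lcar L" if "x \<in> lspan L S" for x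
    using that lsubspace_subset[OF span] by blast
  have "lsubspace L ?W"
    unfolding lsubspace_def
  proof (intro conjI ballI allI)
    show "?W \<subseteq> lcar L"
      using sub by blast
    show "lzero L \<in> ?W"
      using lsubspace_zero[OF span] zero by blast
  next
    fix x y assume "x \<in> ?W" "y \<in> ?W"
    then show "ladd L x y \<in> ?W"
      using lsubspace_add[OF span] add[OF sub sub] by blast
  next
    fix a x assume "x \<in> ?W"
    then show "lsmul L a x \<in> ?W"
      using lsubspace_smul[OF span] smul[OF sub] by blast
  qed
  moreover have "S \<subseteq> ?W"
    using lspan_superset generator by blast
  ultimately show ?thesis
    using x lspan_least by blast
qed

definition subspace_sum :: "'v set \<Rightarrow> 'v set \<Rightarrow> 'v set" where
  "subspace_sum A B = {ladd L a b | a b. a \<in> A \<and> b \<in> B}"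

lemma lsubspace_subspace_sum:
  assumes A: "lsubspace L A" and B: "lsubspace L B"
  shows "lsubspace L (subspace_sum A B)"
  unfolding lsubspace_def
proof (intro conjI ballI allI)
  show "subspace_sum A B \<subseteq> lcar L"
    using A B unfolding subspace_sum_def by (blast dest: lsubspace_subset intro: add_closed)
  have "ladd L (lzero L) (lzero L) \<in> subspace_sum A B"
    unfolding subspace_sum_def using A B by (blast intro: lsubspace_zero)
  then show "lzero L \<in> subspace_sum A B"
    by simp
next
  fix x y assume "x \<in> subspace_sum A B" "y \<in> subspace_sum A B"
  then obtain a b a' b' where xy: "x = ladd L a b" "y = ladd L a' b'"
    and ab: "a \<in> A" "b \<in> B" "a' \<in> A" "b' \<in> B"
    unfolding subspace_sum_def by blast
  have "ladd L x y = ladd L (ladd L a a') (ladd L b b')"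
    unfolding xy using ab A B by (intro add_add_swap) (auto dest: lsubspace_subset)
  moreover have "ladd L a a' \<in> A" "ladd L b b' \<in> B"
    using ab A B by (simp_all add: lsubspace_add)
  ultimately show "ladd L x y \<in> subspace_sum A B"
    unfolding subspace_sum_def by blast
next
  fix c x assume "x \<in> subspace_sum A B"
  then obtain a b where x: "x = ladd L a b" and ab: "a \<in> A" "b \<in> B"
    unfolding subspace_sum_def by blast
  have "lsmul L c x = ladd L (lsmul L c a) (lsmul L c b)"
    unfolding x using ab A B by (intro smul_add) (auto dest: lsubspace_subset)
  moreover have "lsmul L c a \<in> A" "lsmul L c b \<in> B"
    using ab A B by (simp_all add: lsubspace_smul)
  ultimately show "lsmul L c x \<in> subspace_sum A B"
    unfolding subspace_sum_def by blast
qed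

lemma lcoset_iff: "z \<in> lcoset L B x \<longleftrightarrow> (\<exists>b\<in>B. z = ladd L x b)"
  unfolding lcoset_def by blast

lemma lcoset_self: "\<lbrakk>lsubspace L B; x \<in> lcar L\<rbrakk> \<Longrightarrow> x \<in> lcoset L B x"
  using add_zero[of x] lsubspace_zero[of B] unfolding lcoset_iff by metis

lemma lcoset_add_absorb:
  assumes B: "lsubspace L B" and x: "x \<in> lcar L" and b: "b \<in> B"
  shows "lcoset L B (ladd L x b) = lcoset L B x"
proof -
  have bc: "b \<in> lcar L"
    using b B by (blast dest: lsubspace_subset)
  show ?thesis
  proof (intro set_eqI iffI)
    fix z assume "z \<in> lcoset L B (ladd L x b)"
    then obtain c where z: "z = ladd L (ladd L x b) c" and c: "c \<in> B"
      unfolding lcoset_iff by blast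
    have "z = ladd L x (ladd L b c)"
      unfolding z using x bc c B by (intro add_assoc) (auto dest: lsubspace_subset)
    with B b c show "z \<in> lcoset L B x"
      unfolding lcoset_iff by (blast intro: lsubspace_add)
  next
    fix z assume "z \<in> lcoset L B x"
    then obtain c where z: "z = ladd L x c" and c: "c \<in> B"
      unfolding lcoset_iff by blast
    have cc: "c \<in> lcar L"
      using c B by (blast dest: lsubspace_subset)
    have "z = ladd L (ladd L x b) (ladd L (lneg L b) c)"
      unfolding z using x bc cc by (simp add: add_assoc flip: add_assoc[of b])
    with B b c show "z \<in> lcoset L B (ladd L x b)"
      unfolding lcoset_iff by (blast intro: lsubspace_add lsubspace_neg)
  qed
qed

lemma lcoset_eq_iff:
  assumes B: "lsubspace L B" and x: "x \<in> lcar L" and y: "y \<in> lcar L"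
  shows "lcoset L B x = lcoset L B y \<longleftrightarrow> ladd L x (lneg L y) \<in> B"
proof
  assume "lcoset L B x = lcoset L B y"
  then have "x \<in> lcoset L B y"
    using lcoset_self[OF B x] by simp
  then obtain b where "x = ladd L y b" "b \<in> B"
    unfolding lcoset_iff by blast
  with B y show "ladd L x (lneg L y) \<in> B"
    by (simp add: add_neg_cancel_right subsetD[OF lsubspace_subset[OF B]])
next
  assume "ladd L x (lneg L y) \<in> B"
  from lcoset_add_absorb[OF B y this] show "lcoset L B x = lcoset L B y"
    using x y by (simp add: add_neg_cancel_left)
qed

lemma lcoset_eq_zero_iff:
  "\<lbrakk>lsubspace L B; x \<in> lcar L\<rbrakk> \<Longrightarrow> lcoset L B x = lcoset L B (lzero L) \<longleftrightarrow> x \<in> B"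
  using lcoset_eq_iff[of B x "lzero L"] neg_unique[of "lzero L" "lzero L"] by simp

lemma some_in_lcoset:
  assumes B: "lsubspace L B" and x: "x \<in> lcar L"
  obtains b where "b \<in> B" "(SOME z. z \<in> lcoset L B x) = ladd L x b"
  using someI[of "\<lambda>z. z \<in> lcoset L B x", OF lcoset_self[OF B x]] unfolding lcoset_iff by blast

text \<open>On a coset of a subspace \<open>B' \<subseteq> B\<close> this is the map \<open>L/B' \<rightarrow> L/B\<close> induced by the identity;
  the representative is chosen by \<open>SOME\<close>, so well-definedness is the content of
  \<open>coset_map_lcoset\<close>.\<close>
definition coset_map :: "'v set \<Rightarrow> 'v set \<Rightarrow> 'v set" where
  "coset_map B C = lcoset L B (SOME x. x \<in> C)"

lemma coset_map_lcoset:
  assumes B: "lsubspace L B" and B': "lsubspace L B'" and "B' \<subseteq> B" and x: "x \<in> lcar L"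
  shows "coset_map B (lcoset L B' x) = lcoset L B x"
proof -
  obtain b where "b \<in> B'" "(SOME z. z \<in> lcoset L B' x) = ladd L x b"
    using B' x by (rule some_in_lcoset)
  with assms show ?thesis
    unfolding coset_map_def by (simp add: lcoset_add_absorb subsetD)
qed

lemma inj_on_coset_map:
  assumes A: "lsubspace L A" and B: "lsubspace L B"
  shows "inj_on (coset_map B) (lquot L A (B \<inter> A))"
proof (rule inj_onI)
  have BA: "lsubspace L (B \<inter> A)"
    using B A by (rule lsubspace_Int)
  fix X Y assume "X \<in> lquot L A (B \<inter> A)" "Y \<in> lquot L A (B \<inter> A)"
    and eq: "coset_map B X = coset_map B Y"
  then obtain x y where xy: "x \<in> A" "y \<in> A" "X = lcoset L (B \<inter> A) x" "Y = lcoset L (B \<inter> A) y"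
    unfolding lquot_def by blast
  have c: "x \<in> lcar L" "y \<in> lcar L"
    using xy A by (auto dest: lsubspace_subset)
  have "lcoset L B x = lcoset L B y"
    using eq unfolding xy using coset_map_lcoset[OF B BA _ c(1)] coset_map_lcoset[OF B BA _ c(2)]
    by simp
  then have "ladd L x (lneg L y) \<in> B"
    using lcoset_eq_iff[OF B c] by simp
  moreover have "ladd L x (lneg L y) \<in> A"
    using A xy by (simp add: lsubspace_add lsubspace_neg)
  ultimately show "X = Y"
    unfolding xy using lcoset_eq_iff[OF BA c] by simp
qed

lemma coset_map_image_eq_kernel:
  assumes A: "lsubspace L A" and B: "lsubspace L B" and C: "lsubspace L C"
    and AR: "A \<subseteq> R" and R: "R \<subseteq> lcar L" and AC: "A \<subseteq> C" and BC: "B \<subseteq> C"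
    and C_sum: "C \<subseteq> subspace_sum A B"
  shows "coset_map B ` lquot L A (B \<inter> A) =
    {X \<in> lquot L R B. coset_map C X = lcoset L C (lzero L)}"
proof (intro equalityI subsetI)
  fix X assume "X \<in> coset_map B ` lquot L A (B \<inter> A)"
  then obtain x where x: "x \<in> A" and X: "X = coset_map B (lcoset L (B \<inter> A) x)"
    unfolding lquot_def by blast
  have xc: "x \<in> lcar L"
    using x A by (auto dest: lsubspace_subset)
  have X': "X = lcoset L B x"
    unfolding X by (rule coset_map_lcoset[OF B lsubspace_Int[OF B A] _ xc]) blast
  have "X \<in> lquot L R B"
    unfolding X' lquot_def using x AR by blast
  moreover have "coset_map C X = lcoset L C (lzero L)"
    unfolding X' using coset_map_lcoset[OF C B BC xc] lcoset_eq_zero_iff[OF C xc] x AC by auto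
  ultimately show "X \<in> {X \<in> lquot L R B. coset_map C X = lcoset L C (lzero L)}"
    by blast
next
  fix X assume "X \<in> {X \<in> lquot L R B. coset_map C X = lcoset L C (lzero L)}"
  then obtain x where x: "x \<in> R" and X: "X = lcoset L B x"
    and ker: "coset_map C X = lcoset L C (lzero L)"
    unfolding lquot_def by blast
  have xc: "x \<in> lcar L"
    using x R by blast
  have "x \<in> C"
    using ker unfolding X coset_map_lcoset[OF C B BC xc] lcoset_eq_zero_iff[OF C xc] .
  then obtain a b where ab: "x = ladd L a b" "a \<in> A" "b \<in> B"
    using C_sum unfolding subspace_sum_def by blast
  have ac: "a \<in> lcar L"
    using ab A by (auto dest: lsubspace_subset)
  have "X = coset_map B (lcoset L (B \<inter> A) a)"
    unfolding X ab(1) lcoset_add_absorb[OF B ac ab(3)]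
    by (rule coset_map_lcoset[OF B lsubspace_Int[OF B A] _ ac, symmetric]) blast
  moreover have "lcoset L (B \<inter> A) a \<in> lquot L A (B \<inter> A)"
    unfolding lquot_def using ab(2) by blast
  ultimately show "X \<in> coset_map B ` lquot L A (B \<inter> A)"
    by blast
qed

section \<open>Lie brackets of ideals and the lower Lie-central series\<close>

abbreviation lie_sym :: "'v \<Rightarrow> 'v \<Rightarrow> 'v" where
  "lie_sym m n \<equiv> ladd L (lbr L m n) (lbr L n m)"

lemma lie_sym_commute: "\<lbrakk>m \<in> lcar L; n \<in> lcar L\<rbrakk> \<Longrightarrow> lie_sym m n = lie_sym n m"
  by (simp add: add_commute)

lemma lie_sym_add_right:
  assumes "f \<in> lcar L" "y \<in> lcar L" "t \<in> lcar L"
  shows "lie_sym f (ladd L y t) = ladd L (lie_sym f y) (lie_sym f t)"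
  using assms by (simp add: bracket_add_left bracket_add_right add_add_swap)

lemma bracket_lie_sym_eq_zero:
  assumes "x \<in> lcar L" "m \<in> lcar L" "n \<in> lcar L"
  shows "lbr L x (lie_sym m n) = lzero L"
proof -
  define a where "a = lbr L (lbr L x m) n"
  define b where "b = lbr L (lbr L x n) m"
  have ab: "a \<in> lcar L" "b \<in> lcar L"
    using assms unfolding a_def b_def by auto
  have "lbr L x (lie_sym m n) = ladd L (lbr L x (lbr L m n)) (lbr L x (lbr L n m))"
    using assms by (simp add: bracket_add_right)
  also have "\<dots> = ladd L (ladd L a (lneg L b)) (ladd L b (lneg L a))"
    unfolding a_def b_def using leibniz_identity[OF assms] leibniz_identity[of x n m] assms
    by simp
  also have "\<dots> = ladd L (ladd L a b) (ladd L (lneg L b) (lneg L a))"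
    using ab by (simp add: add_add_swap)
  also have "\<dots> = ladd L (ladd L a b) (lneg L (ladd L a b))"
    using ab by (simp add: neg_add_distrib add_commute[of "lneg L a"])
  also have "\<dots> = lzero L"
    using ab by simp
  finally show ?thesis .
qed

lemma bracket_right_derivation:
  assumes "x \<in> lcar L" "m \<in> lcar L" "n \<in> lcar L"
  shows "lbr L (lbr L m n) x = ladd L (lbr L m (lbr L n x)) (lbr L (lbr L m x) n)"
  using assms leibniz_identity[of m n x] by (simp add: add_assoc)

lemma lie_sym_bracket:
  assumes "x \<in> lcar L" "m \<in> lcar L" "n \<in> lcar L"
  shows "lbr L (lie_sym m n) x = ladd L (lie_sym (lbr L m x) n) (lie_sym m (lbr L n x))"
proof -
  define A where "A = lbr L m (lbr L n x)"
  define B where "B = lbr L (lbr L m x) n"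
  define C where "C = lbr L n (lbr L m x)"
  define D where "D = lbr L (lbr L n x) m"
  have ABCD: "A \<in> lcar L" "B \<in> lcar L" "C \<in> lcar L" "D \<in> lcar L"
    using assms unfolding A_def B_def C_def D_def by auto
  have "lbr L (lie_sym m n) x = ladd L (ladd L A B) (ladd L C D)"
    unfolding A_def B_def C_def D_def using assms
    by (simp add: bracket_add_left bracket_right_derivation[OF assms]
        bracket_right_derivation[OF assms(1,3,2)])
  also have "\<dots> = ladd L (ladd L B C) (ladd L A D)"
    using ABCD by (simp add: add_add_swap add_commute[of A B])
  finally show ?thesis
    unfolding A_def B_def C_def D_def .
qed

lemma lie_sym_generators_subset:
  "\<lbrakk>M \<subseteq> lcar L; N \<subseteq> lcar L\<rbrakk> \<Longrightarrow> {lie_sym m n |m n. m \<in> M \<and> n \<in> N} \<subseteq> lcar L"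
  by (auto simp: subset_iff)

lemma lsubspace_lie_br: "\<lbrakk>M \<subseteq> lcar L; N \<subseteq> lcar L\<rbrakk> \<Longrightarrow> lsubspace L (lie_br L M N)"
  unfolding lie_br_def by (intro lsubspace_lspan lie_sym_generators_subset)

lemma lie_sym_in_lie_br:
  assumes "m \<in> M" "n \<in> N"
  shows "lie_sym m n \<in> lie_br L M N"
proof -
  have "lie_sym m n \<in> {lie_sym m n |m n. m \<in> M \<and> n \<in> N}"
    using assms by blast
  then show ?thesis
    unfolding lie_br_def by (rule subsetD[OF lspan_superset])
qed

lemma lie_br_least:
  assumes "lsubspace L W" and "\<And>m n. \<lbrakk>m \<in> M; n \<in> N\<rbrakk> \<Longrightarrow> lie_sym m n \<in> W"
  shows "lie_br L M N \<subseteq> W"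
  unfolding lie_br_def by (rule lspan_least[OF assms(1)]) (use assms(2) in blast)

lemma lie_br_mono:
  assumes "M \<subseteq> M'" "N \<subseteq> N'" "M' \<subseteq> lcar L" "N' \<subseteq> lcar L"
  shows "lie_br L M N \<subseteq> lie_br L M' N'"
proof (rule lie_br_least)
  show "lsubspace L (lie_br L M' N')"
    using assms(3,4) by (rule lsubspace_lie_br)
  show "lie_sym m n \<in> lie_br L M' N'" if "m \<in> M" "n \<in> N" for m n
    using that assms(1,2) by (intro lie_sym_in_lie_br) blast+
qed

lemma lideal_subspace: "lideal L I \<Longrightarrow> lsubspace L I"
  and lideal_subset: "lideal L I \<Longrightarrow> I \<subseteq> lcar L"
  and lideal_bracket_left: "\<lbrakk>lideal L I; x \<in> lcar L; i \<in> I\<rbrakk> \<Longrightarrow> lbr L x i \<in> I"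
  and lideal_bracket_right: "\<lbrakk>lideal L I; x \<in> lcar L; i \<in> I\<rbrakk> \<Longrightarrow> lbr L i x \<in> I"
  unfolding lideal_def lsubspace_def by blast+

lemma lideal_lcar: "lideal L (lcar L)"
  unfolding lideal_def using lsubspace_lcar by auto

lemma lideal_lie_br:
  assumes M: "lideal L M" and N: "lideal L N"
  shows "lideal L (lie_br L M N)"
proof -
  have MN: "M \<subseteq> lcar L" "N \<subseteq> lcar L"
    using M N by (simp_all add: lideal_subset)
  let ?W = "lie_br L M N"
  have W: "lsubspace L ?W"
    using MN by (rule lsubspace_lie_br)
  have "lbr L x i \<in> ?W \<and> lbr L i x \<in> ?W" if x: "x \<in> lcar L" and i: "i \<in> ?W" for x i
    using i[unfolded lie_br_def]
  proof (rule lspan_induct)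
    show "{lie_sym m n |m n. m \<in> M \<and> n \<in> N} \<subseteq> lcar L"
      using MN by (rule lie_sym_generators_subset)
  next
    fix g assume "g \<in> {lie_sym m n |m n. m \<in> M \<and> n \<in> N}"
    then obtain m n where mn: "m \<in> M" "n \<in> N" and g: "g = lie_sym m n"
      by blast
    have "lbr L x g = lzero L"
      unfolding g using x mn MN by (intro bracket_lie_sym_eq_zero) auto
    moreover have "lbr L g x = ladd L (lie_sym (lbr L m x) n) (lie_sym m (lbr L n x))"
      unfolding g using x mn MN by (intro lie_sym_bracket) auto
    moreover have "lie_sym (lbr L m x) n \<in> ?W" "lie_sym m (lbr L n x) \<in> ?W"
      using M N x mn by (auto intro: lie_sym_in_lie_br lideal_bracket_right)
    ultimately show "lbr L x g \<in> ?W \<and> lbr L g x \<in> ?W"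
      using W by (simp add: lsubspace_zero lsubspace_add)
  next
    show "lbr L x (lzero L) \<in> ?W \<and> lbr L (lzero L) x \<in> ?W"
      using W x by (simp add: lsubspace_zero)
  next
    fix y z assume "y \<in> lcar L" "z \<in> lcar L"
      and "lbr L x y \<in> ?W \<and> lbr L y x \<in> ?W" "lbr L x z \<in> ?W \<and> lbr L z x \<in> ?W"
    then show "lbr L x (ladd L y z) \<in> ?W \<and> lbr L (ladd L y z) x \<in> ?W"
      using W x by (simp add: bracket_add_left bracket_add_right lsubspace_add)
  next
    fix a y assume "y \<in> lcar L" "lbr L x y \<in> ?W \<and> lbr L y x \<in> ?W"
    then show "lbr L x (lsmul L a y) \<in> ?W \<and> lbr L (lsmul L a y) x \<in> ?W"
      using W x by (simp add: bracket_smul_left bracket_smul_right lsubspace_smul)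
  qed
  with W show ?thesis
    unfolding lideal_def by blast
qed

lemma lie_br_subset_left: "\<lbrakk>lideal L M; N \<subseteq> lcar L\<rbrakk> \<Longrightarrow> lie_br L M N \<subseteq> M"
  by (rule lie_br_least)
    (auto intro: lideal_subspace lsubspace_add lideal_bracket_left lideal_bracket_right)

lemma lie_br_subset_right: "\<lbrakk>lideal L N; M \<subseteq> lcar L\<rbrakk> \<Longrightarrow> lie_br L M N \<subseteq> N"
  by (rule lie_br_least)
    (auto intro: lideal_subspace lsubspace_add lideal_bracket_left lideal_bracket_right)

lemma lideal_lie_lcs: "lideal L (lie_lcs L i)"
proof -
  have "lideal L (lcs0 L n)" for n
    by (induction n) (simp_all add: lideal_lcar lideal_lie_br)
  then show ?thesis
    unfolding lie_lcs_def .
qed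

lemma lie_lcs_antimono:
  assumes "i \<le> j"
  shows "lie_lcs L j \<subseteq> lie_lcs L i"
proof -
  have decreasing: "lcs0 L (Suc n) \<subseteq> lcs0 L n" for n
    using lie_br_subset_left[OF lideal_lie_lcs[of "Suc n"]] by (simp add: lie_lcs_def)
  have "lcs0 L n \<subseteq> lcs0 L m" if "m \<le> n" for m n
    using that
  proof (induction n rule: dec_induct)
    case (step n)
    with decreasing[of n] show ?case
      by blast
  qed simp
  with assms show ?thesis
    unfolding lie_lcs_def by simp
qed

lemma quot_alg_lcar: "lcar (quot_alg L I) = lcoset L I ` lcar L"
  by (simp add: quot_alg_def lquot_def)

lemma quot_alg_lzero: "lzero (quot_alg L I) = lcoset L I (lzero L)"
  by (simp add: quot_alg_def)

lemma quot_alg_ladd: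
  assumes I: "lsubspace L I" and a: "a \<in> lcar L" and b: "b \<in> lcar L"
  shows "ladd (quot_alg L I) (lcoset L I a) (lcoset L I b) = lcoset L I (ladd L a b)"
proof -
  obtain i where i: "i \<in> I" "(SOME z. z \<in> lcoset L I a) = ladd L a i"
    using I a by (rule some_in_lcoset)
  obtain j where j: "j \<in> I" "(SOME z. z \<in> lcoset L I b) = ladd L b j"
    using I b by (rule some_in_lcoset)
  have ij: "i \<in> lcar L" "j \<in> lcar L"
    using i j I by (auto dest: lsubspace_subset)
  have "ladd (quot_alg L I) (lcoset L I a) (lcoset L I b) =
    lcoset L I (ladd L (ladd L a b) (ladd L i j))"
    by (simp add: quot_alg_def i(2) j(2) add_add_swap a b ij)
  also have "\<dots> = lcoset L I (ladd L a b)"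
    using I a b i j by (simp add: lcoset_add_absorb lsubspace_add)
  finally show ?thesis .
qed

lemma quot_alg_lneg:
  assumes I: "lsubspace L I" and a: "a \<in> lcar L"
  shows "lneg (quot_alg L I) (lcoset L I a) = lcoset L I (lneg L a)"
proof -
  obtain i where i: "i \<in> I" "(SOME z. z \<in> lcoset L I a) = ladd L a i"
    using I a by (rule some_in_lcoset)
  have ic: "i \<in> lcar L"
    using i I by (auto dest: lsubspace_subset)
  have "lneg (quot_alg L I) (lcoset L I a) = lcoset L I (ladd L (lneg L a) (lneg L i))"
    by (simp add: quot_alg_def i(2) neg_add_distrib a ic)
  also have "\<dots> = lcoset L I (lneg L a)"
    using I a i by (simp add: lcoset_add_absorb lsubspace_neg)
  finally show ?thesis .
qed

lemma quot_alg_lsmul: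
  assumes I: "lsubspace L I" and a: "a \<in> lcar L"
  shows "lsmul (quot_alg L I) c (lcoset L I a) = lcoset L I (lsmul L c a)"
proof -
  obtain i where i: "i \<in> I" "(SOME z. z \<in> lcoset L I a) = ladd L a i"
    using I a by (rule some_in_lcoset)
  have ic: "i \<in> lcar L"
    using i I by (auto dest: lsubspace_subset)
  have "lsmul (quot_alg L I) c (lcoset L I a) = lcoset L I (ladd L (lsmul L c a) (lsmul L c i))"
    by (simp add: quot_alg_def i(2) smul_add a ic)
  also have "\<dots> = lcoset L I (lsmul L c a)"
    using I a i by (simp add: lcoset_add_absorb lsubspace_smul)
  finally show ?thesis .
qed

lemma quot_alg_lbr:
  assumes I: "lideal L I" and a: "a \<in> lcar L" and b: "b \<in> lcar L"
  shows "lbr (quot_alg L I) (lcoset L I a) (lcoset L I b) = lcoset L I (lbr L a b)"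
proof -
  have Is: "lsubspace L I"
    using I by (rule lideal_subspace)
  obtain i where i: "i \<in> I" "(SOME z. z \<in> lcoset L I a) = ladd L a i"
    using Is a by (rule some_in_lcoset)
  obtain j where j: "j \<in> I" "(SOME z. z \<in> lcoset L I b) = ladd L b j"
    using Is b by (rule some_in_lcoset)
  have ij: "i \<in> lcar L" "j \<in> lcar L"
    using i j Is by (auto dest: lsubspace_subset)
  have "lbr (quot_alg L I) (lcoset L I a) (lcoset L I b) =
    lcoset L I (lbr L (ladd L a i) (ladd L b j))"
    by (simp add: quot_alg_def i(2) j(2))
  also have "lbr L (ladd L a i) (ladd L b j) =
    ladd L (lbr L a b) (ladd L (lbr L a j) (lbr L i (ladd L b j)))"
    using a b ij by (simp add: bracket_add_left bracket_add_right add_assoc add_left_commute[of "lbr L i b"])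
  also have "lcoset L I \<dots> = lcoset L I (lbr L a b)"
    using Is I a b i j ij
    by (simp add: lcoset_add_absorb lsubspace_add lideal_bracket_left lideal_bracket_right)
  finally show ?thesis .
qed

lemma leibniz_algebra_quot_alg:
  assumes I: "lideal L I"
  shows "leibniz_algebra (quot_alg L I)"
proof -
  have Is: "lsubspace L I"
    using I by (rule lideal_subspace)
  note quot = quot_alg_ladd[OF Is] quot_alg_lneg[OF Is] quot_alg_lsmul[OF Is] quot_alg_lbr[OF I]
  have ball_image: "(\<forall>X\<in>f ` A. P X) \<longleftrightarrow> (\<forall>x\<in>A. P (f x))" for f :: "'v \<Rightarrow> 'v set" and A P
    by blast
  show ?thesis
    unfolding leibniz_algebra_def quot_alg_lcar quot_alg_lzero ball_image
    apply (intro conjI allI)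
    subgoal by (rule imageI) simp
    subgoal by (auto simp: quot)
    subgoal by (auto simp: quot)
    subgoal by (auto simp: quot)
    subgoal by (auto simp: quot)
    subgoal by (simp add: quot add_assoc)
    subgoal by (simp add: quot add_commute)
    subgoal by (simp add: quot)
    subgoal by (simp add: quot)
    subgoal by (simp add: quot smul_add_scalar)
    subgoal by (simp add: quot smul_add)
    subgoal by (simp add: quot smul_smul)
    subgoal by (simp add: quot)
    subgoal by (simp add: quot bracket_add_left)
    subgoal by (simp add: quot bracket_add_right)
    subgoal by (simp add: quot bracket_smul_left)
    subgoal by (simp add: quot bracket_smul_right)
    subgoal by (simp add: quot leibniz_identity)
    done
qed

lemma leib_hom_lcoset:
  assumes I: "lideal L I"
  shows "leib_hom L (quot_alg L I) (lcoset L I)"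
  using lideal_subspace[OF I]
  unfolding leib_hom_def quot_alg_lcar by (simp add: quot_alg_ladd quot_alg_lsmul quot_alg_lbr[OF I])


end

lemma lie_lcs_Suc: "1 \<le> i \<Longrightarrow> lie_lcs L (Suc i) = lie_br L (lie_lcs L i) (lcar L)"
  unfolding lie_lcs_def by (cases i) simp_all


lemma leib_hom_comp:
  assumes f: "leib_hom L M f" and g: "leib_hom M N g"
  shows "leib_hom L N (\<lambda>x. g (f x))"
proof -
  have "f x \<in> lcar M" if "x \<in> lcar L" for x
    using f that unfolding leib_hom_def by blast
  with f g show ?thesis
    unfolding leib_hom_def by (auto simp: image_subset_iff)
qed

lemma free_presentation_quot_alg:
  assumes pres: "free_presentation F G \<pi>" and I: "lideal G I"
  shows "free_presentation F (quot_alg G I) (\<lambda>x. lcoset G I (\<pi> x))"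
proof -
  interpret G: leibniz G
    using pres unfolding free_presentation_def by unfold_locales blast
  have "leib_hom F (quot_alg G I) (\<lambda>x. lcoset G I (\<pi> x))"
    using pres G.leib_hom_lcoset[OF I] unfolding free_presentation_def by (blast intro: leib_hom_comp)
  moreover have "(\<lambda>x. lcoset G I (\<pi> x)) ` lcar F = lcar (quot_alg G I)"
    using pres unfolding free_presentation_def G.quot_alg_lcar by (simp add: image_image[symmetric])
  ultimately show ?thesis
    using pres G.leibniz_algebra_quot_alg[OF I] unfolding free_presentation_def by blast
qed

text \<open>\<open>h\<close> evaluated at a representative chosen by \<open>SOME\<close>; it is the map induced on
  \<open>L/C\<close> when \<open>C \<subseteq> ker h\<close> (\<open>induced_map_lcoset\<close>).\<close>
definition induced_map :: "('v \<Rightarrow> 'w) \<Rightarrow> 'v set \<Rightarrow> 'w" where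
  "induced_map h C = h (SOME x. x \<in> C)"

locale leibniz_hom = L: leibniz L + M: leibniz M
  for L :: "('k::field, 'v) leib" and M :: "('k, 'w) leib" +
  fixes h :: "'v \<Rightarrow> 'w"
  assumes leib_hom: "leib_hom L M h"
begin

lemma
  shows hom_closed [simp]: "x \<in> lcar L \<Longrightarrow> h x \<in> lcar M"
    and hom_add: "\<lbrakk>x \<in> lcar L; y \<in> lcar L\<rbrakk> \<Longrightarrow> h (ladd L x y) = ladd M (h x) (h y)"
    and hom_smul: "x \<in> lcar L \<Longrightarrow> h (lsmul L a x) = lsmul M a (h x)"
    and hom_bracket: "\<lbrakk>x \<in> lcar L; y \<in> lcar L\<rbrakk> \<Longrightarrow> h (lbr L x y) = lbr M (h x) (h y)"
  using leib_hom unfolding leib_hom_def by auto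

lemma hom_zero [simp]: "h (lzero L) = lzero M"
  using hom_smul[of "lzero L" 0] by simp

lemma hom_neg: "x \<in> lcar L \<Longrightarrow> h (lneg L x) = lneg M (h x)"
  using hom_smul[of x "-1"] by (simp add: L.smul_minus_one M.smul_minus_one)

lemma lideal_lkernel: "lideal L (lkernel L M h)"
  unfolding lideal_def lsubspace_def lkernel_def by (auto simp: hom_add hom_smul hom_bracket)

lemma lsubspace_image:
  assumes W: "lsubspace L W"
  shows "lsubspace M (h ` W)"
proof -
  have Wc: "x \<in> lcar L" if "x \<in> W" for x
    using W that by (blast dest: L.lsubspace_subset)
  show ?thesis
    unfolding lsubspace_def
  proof (intro conjI ballI allI)
    show "h ` W \<subseteq> lcar M"
      using Wc by auto
    have "h (lzero L) \<in> h ` W"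
      using L.lsubspace_zero[OF W] by (rule imageI)
    then show "lzero M \<in> h ` W"
      by simp
  next
    fix x y assume "x \<in> h ` W" "y \<in> h ` W"
    then obtain a b where ab: "a \<in> W" "b \<in> W" and xy: "x = h a" "y = h b"
      by blast
    have "ladd M x y = h (ladd L a b)"
      unfolding xy using ab by (simp add: hom_add Wc)
    moreover have "ladd L a b \<in> W"
      using W ab by (rule L.lsubspace_add)
    ultimately show "ladd M x y \<in> h ` W"
      by (simp add: image_eqI)
  next
    fix c x assume "x \<in> h ` W"
    then obtain a where a: "a \<in> W" and x: "x = h a"
      by blast
    have "lsmul M c x = h (lsmul L c a)"
      unfolding x using a by (simp add: hom_smul Wc)
    moreover have "lsmul L c a \<in> W"
      using W a by (rule L.lsubspace_smul)
    ultimately show "lsmul M c x \<in> h ` W"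
      by (simp add: image_eqI)
  qed
qed

lemma image_lspan:
  assumes S: "S \<subseteq> lcar L"
  shows "h ` lspan L S = lspan M (h ` S)"
proof
  have hS: "h ` S \<subseteq> lcar M"
    using S by auto
  have span: "lsubspace M (lspan M (h ` S))"
    using hS by (rule M.lsubspace_lspan)
  show "h ` lspan L S \<subseteq> lspan M (h ` S)"
  proof
    fix y assume "y \<in> h ` lspan L S"
    then obtain x where x: "x \<in> lspan L S" and y: "y = h x"
      by blast
    have "h x \<in> lspan M (h ` S)"
      using x S
    proof (rule L.lspan_induct)
      show "h s \<in> lspan M (h ` S)" if "s \<in> S" for s
        using that M.lspan_superset by blast
    qed (use span in \<open>simp_all add: M.lsubspace_zero M.lsubspace_add M.lsubspace_smul
      hom_add hom_smul\<close>)
    then show "y \<in> lspan M (h ` S)"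
      unfolding y .
  qed
  show "lspan M (h ` S) \<subseteq> h ` lspan L S"
    using lsubspace_image[OF L.lsubspace_lspan[OF S]] L.lspan_superset
    by (rule M.lspan_least[OF _ image_mono])
qed

lemma image_lie_br:
  assumes A: "A \<subseteq> lcar L" and B: "B \<subseteq> lcar L"
  shows "h ` lie_br L A B = lie_br M (h ` A) (h ` B)"
proof -
  have sym: "h (L.lie_sym m n) = M.lie_sym (h m) (h n)" if "m \<in> A" "n \<in> B" for m n
    using subsetD[OF A that(1)] subsetD[OF B that(2)] by (simp add: hom_add hom_bracket)
  have "h ` {L.lie_sym m n |m n. m \<in> A \<and> n \<in> B} = {M.lie_sym m n |m n. m \<in> h ` A \<and> n \<in> h ` B}"
  proof (intro equalityI subsetI)
    fix y assume "y \<in> h ` {L.lie_sym m n |m n. m \<in> A \<and> n \<in> B}"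
    with sym show "y \<in> {M.lie_sym m n |m n. m \<in> h ` A \<and> n \<in> h ` B}"
      by blast
  next
    fix y assume "y \<in> {M.lie_sym m n |m n. m \<in> h ` A \<and> n \<in> h ` B}"
    then obtain m n where mn: "m \<in> A" "n \<in> B" and "y = M.lie_sym (h m) (h n)"
      by blast
    then have "y = h (L.lie_sym m n)"
      by (simp add: sym)
    with mn show "y \<in> h ` {L.lie_sym m n |m n. m \<in> A \<and> n \<in> B}"
      by blast
  qed
  then show ?thesis
    unfolding lie_br_def using image_lspan[OF L.lie_sym_generators_subset[OF A B]] by simp
qed

lemma image_lie_lcs:
  assumes surj: "h ` lcar L = lcar M"
  shows "h ` lie_lcs L i = lie_lcs M i"
proof -
  have "h ` lcs0 L n = lcs0 M n" for n
  proof (induction n)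
    case (Suc n)
    have "lcs0 L n \<subseteq> lcar L"
      using L.lideal_subset[OF L.lideal_lie_lcs[of "Suc n"]] by (simp add: lie_lcs_def)
    with Suc surj show ?case
      by (simp add: image_lie_br)
  qed (simp add: surj)
  then show ?thesis
    unfolding lie_lcs_def .
qed

lemma lkernel_quot_comp:
  assumes I: "lsubspace M I"
  shows "lkernel L (quot_alg M I) (\<lambda>x. lcoset M I (h x)) = {x \<in> lcar L. h x \<in> I}"
proof -
  have "lcoset M I (h x) = lcoset M I (lzero M) \<longleftrightarrow> h x \<in> I" if "x \<in> lcar L" for x
    using M.lcoset_eq_zero_iff[OF I] that by simp
  then show ?thesis
    unfolding lkernel_def M.quot_alg_lzero by blast
qed

lemma induced_map_lcoset:
  assumes C: "lsubspace L C" "C \<subseteq> lkernel L M h" and x: "x \<in> lcar L"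
  shows "induced_map h (lcoset L C x) = h x"
proof -
  obtain c where c: "c \<in> C" "(SOME z. z \<in> lcoset L C x) = ladd L x c"
    using C(1) x by (rule L.some_in_lcoset)
  then have "c \<in> lkernel L M h"
    using C(2) by blast
  with c x show ?thesis
    unfolding induced_map_def lkernel_def by (simp add: hom_add)
qed

lemma induced_map_image:
  assumes C: "lsubspace L C" "C \<subseteq> lkernel L M h" and S: "S \<subseteq> lcar L"
  shows "induced_map h ` lquot L S C = h ` S"
proof -
  have "induced_map h (lcoset L C x) = h x" if "x \<in> S" for x
    using C subsetD[OF S that] by (rule induced_map_lcoset)
  then show ?thesis
    unfolding lquot_def image_image by (rule image_cong[OF refl])
qed

lemma coset_map_image_eq_induced_kernel:
  assumes B: "lsubspace L B" and C: "lsubspace L C" and BC: "B \<subseteq> C"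
    and C_ker: "C \<subseteq> lkernel L M h" and S: "S \<subseteq> lcar L" and R: "R = S \<inter> lkernel L M h"
  shows "L.coset_map C ` lquot L R B = {X \<in> lquot L S C. induced_map h X = lzero M}"
proof -
  have coset_map: "L.coset_map C (lcoset L B x) = lcoset L C x" if "x \<in> S" for x
    using C B BC subsetD[OF S that] by (rule L.coset_map_lcoset)
  have induced: "induced_map h (lcoset L C x) = h x" if "x \<in> S" for x
    using C C_ker subsetD[OF S that] by (rule induced_map_lcoset)
  show ?thesis
  proof (intro equalityI subsetI)
    fix X assume "X \<in> L.coset_map C ` lquot L R B"
    then obtain x where x: "x \<in> S" "h x = lzero M" and X: "X = L.coset_map C (lcoset L B x)"
      unfolding R lquot_def lkernel_def by blast
    have "X = lcoset L C x"
      unfolding X using x(1) by (rule coset_map)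
    with x induced show "X \<in> {X \<in> lquot L S C. induced_map h X = lzero M}"
      unfolding lquot_def by simp
  next
    fix X assume "X \<in> {X \<in> lquot L S C. induced_map h X = lzero M}"
    then obtain x where x: "x \<in> S" and X: "X = lcoset L C x" and "induced_map h X = lzero M"
      unfolding lquot_def by blast
    then have "h x = lzero M"
      using induced by simp
    with x S have "lcoset L B x \<in> lquot L R B"
      unfolding R lquot_def lkernel_def by blast
    moreover have "X = L.coset_map C (lcoset L B x)"
      unfolding X using x by (rule coset_map[symmetric])
    ultimately show "X \<in> L.coset_map C ` lquot L R B"
      by blast
  qed
qed

end


section \<open>Quotients by Lie-central images of ideals\<close>

locale lie_central_quotient = leibniz_hom F G \<pi>
  for F :: "('k::field, 'v) leib" and G :: "('k, 'w) leib" and \<pi> :: "'v \<Rightarrow> 'w" +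
  fixes N :: "'v set" and I :: "'w set"
  assumes surj: "\<pi> ` lcar F = lcar G"
    and lideal_N: "lideal F N"
    and N_subset_derived: "N \<subseteq> lie_br F (lcar F) (lcar F)"
    and lideal_I: "lideal G I"
    and image_N: "\<pi> ` N = I"
    and lie_central: "lie_br F N (lcar F) \<subseteq> lkernel F G \<pi>"
begin

text \<open>\<open>N\<close> and \<open>I = \<pi>(N)\<close> play the roles of \<open>f^[k]\<close> and \<open>g^[k]\<close>; \<open>r\<close> and \<open>s\<close> are the
  relation ideals of \<open>G\<close> and of \<open>G/I\<close>.\<close>
abbreviation "r \<equiv> lkernel F G \<pi>"
abbreviation "s \<equiv> lkernel F (quot_alg G I) (\<lambda>x. lcoset G I (\<pi> x))"
abbreviation "fr \<equiv> lie_br F (lcar F) r"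
abbreviation "fs \<equiv> lie_br F (lcar F) s"
abbreviation "Nf \<equiv> lie_br F N (lcar F)"
abbreviation "ff \<equiv> lie_br F (lcar F) (lcar F)"

lemma s_eq: "s = {x \<in> lcar F. \<pi> x \<in> I}"
  using lideal_I by (intro lkernel_quot_comp M.lideal_subspace)

lemma lideal_r: "lideal F r"
  by (rule lideal_lkernel)

lemma N_subset: "N \<subseteq> lcar F"
  using lideal_N by (rule L.lideal_subset)

lemma r_subset_s: "r \<subseteq> s"
  unfolding s_eq unfolding lkernel_def using M.lsubspace_zero[OF M.lideal_subspace[OF lideal_I]] by auto

lemma N_subset_s: "N \<subseteq> s"
  unfolding s_eq using N_subset image_N by blast

lemma s_subset_sum: "s \<subseteq> L.subspace_sum N r"
proof
  fix x assume "x \<in> s"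
  then have x: "x \<in> lcar F" "\<pi> x \<in> I"
    unfolding s_eq by blast+
  then obtain y where y: "y \<in> N" "\<pi> y = \<pi> x"
    using image_N by (metis imageE)
  have yc: "y \<in> lcar F"
    using y(1) N_subset by blast
  have "\<pi> (ladd F x (lneg F y)) = lzero G"
    using x yc y(2) by (simp add: hom_add hom_neg)
  then have "ladd F x (lneg F y) \<in> r"
    unfolding lkernel_def using x yc by simp
  moreover have "x = ladd F y (ladd F x (lneg F y))"
    using x yc by (simp add: L.add_neg_cancel_left)
  ultimately show "x \<in> L.subspace_sum N r"
    unfolding L.subspace_sum_def using y(1) by blast
qed

lemma s_subset: "s \<subseteq> lcar F"
  unfolding s_eq by blast

lemma lsubspace_fr: "lsubspace F fr"
  using L.lideal_subset[OF lideal_r] by (intro L.lsubspace_lie_br) simp_all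

lemma lsubspace_fs: "lsubspace F fs"
  using s_subset by (intro L.lsubspace_lie_br) simp_all

lemma lsubspace_Nf: "lsubspace F Nf"
  using N_subset by (intro L.lsubspace_lie_br) simp_all

lemma fr_subset_fs: "fr \<subseteq> fs"
  using r_subset_s s_subset by (intro L.lie_br_mono) simp_all

lemma Nf_subset_fs: "Nf \<subseteq> fs"
proof (rule L.lie_br_least[OF lsubspace_fs])
  fix m n assume "m \<in> N" "n \<in> lcar F"
  moreover have "L.lie_sym n m \<in> fs"
    using calculation N_subset_s by (intro L.lie_sym_in_lie_br) blast+
  ultimately show "L.lie_sym m n \<in> fs"
    using N_subset by (simp add: L.lie_sym_commute subset_iff)
qed

lemma fs_subset_sum: "fs \<subseteq> L.subspace_sum Nf fr"
proof (rule L.lie_br_least)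
  show "lsubspace F (L.subspace_sum Nf fr)"
    using lsubspace_Nf lsubspace_fr by (rule L.lsubspace_subspace_sum)
next
  fix f x assume f: "f \<in> lcar F" and "x \<in> s"
  then obtain y t where yt: "y \<in> N" "t \<in> r" "x = ladd F y t"
    using s_subset_sum unfolding L.subspace_sum_def by blast
  have c: "y \<in> lcar F" "t \<in> lcar F"
    using yt N_subset L.lideal_subset[OF lideal_r] by blast+
  have "L.lie_sym f x = ladd F (L.lie_sym y f) (L.lie_sym f t)"
    unfolding yt(3) using f c by (simp add: L.lie_sym_add_right L.lie_sym_commute[of f y])
  moreover have "L.lie_sym y f \<in> Nf" "L.lie_sym f t \<in> fr"
    using yt f by (simp_all add: L.lie_sym_in_lie_br)
  ultimately show "L.lie_sym f x \<in> L.subspace_sum Nf fr"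
    unfolding L.subspace_sum_def by blast
qed

lemma fs_subset_r: "fs \<subseteq> r"
proof
  fix x assume "x \<in> fs"
  then obtain a b where "x = ladd F a b" "a \<in> Nf" "b \<in> fr"
    using fs_subset_sum unfolding L.subspace_sum_def by blast
  moreover have "fr \<subseteq> r"
    using lideal_r by (rule L.lie_br_subset_right) simp
  ultimately show "x \<in> r"
    using lie_central L.lideal_subspace[OF lideal_r] by (blast intro: L.lsubspace_add)
qed

lemma Nf_subset_ff: "Nf \<subseteq> ff"
  using N_subset by (intro L.lie_br_mono) simp_all

theorem schur_lie_exact_sequence:
  "(\<forall>x\<in>Nf. L.coset_map fr (lcoset F (fr \<inter> Nf) x) = lcoset F fr x) \<and>
   (\<forall>x\<in>r \<inter> ff. L.coset_map fs (lcoset F fr x) = lcoset F fs x) \<and>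
   (\<forall>x\<in>s \<inter> ff. induced_map \<pi> (lcoset F fs x) = \<pi> x) \<and>
   inj_on (L.coset_map fr) (lquot F Nf (fr \<inter> Nf)) \<and>
   L.coset_map fr ` lquot F Nf (fr \<inter> Nf) =
     {C \<in> schur_lie F G \<pi>. L.coset_map fs C = lcoset F fs (lzero F)} \<and>
   L.coset_map fs ` schur_lie F G \<pi> =
     {C \<in> schur_lie F (quot_alg G I) (\<lambda>x. lcoset G I (\<pi> x)). induced_map \<pi> C = lzero G} \<and>
   induced_map \<pi> ` schur_lie F (quot_alg G I) (\<lambda>x. lcoset G I (\<pi> x)) = I"
proof (intro conjI ballI)
  have r_subset: "r \<subseteq> lcar F"
    using lideal_r by (rule L.lideal_subset)
  have Nf_subset: "Nf \<subseteq> lcar F"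
    using lsubspace_Nf by (rule L.lsubspace_subset)
  show "L.coset_map fr (lcoset F (fr \<inter> Nf) x) = lcoset F fr x" if "x \<in> Nf" for x
    using lsubspace_fr L.lsubspace_Int[OF lsubspace_fr lsubspace_Nf] _ subsetD[OF Nf_subset that]
    by (rule L.coset_map_lcoset) blast
  show "L.coset_map fs (lcoset F fr x) = lcoset F fs x" if "x \<in> r \<inter> ff" for x
    using lsubspace_fs lsubspace_fr fr_subset_fs subsetD[OF r_subset] that
    by (simp add: L.coset_map_lcoset)
  show "induced_map \<pi> (lcoset F fs x) = \<pi> x" if "x \<in> s \<inter> ff" for x
    using lsubspace_fs fs_subset_r subsetD[OF s_subset] that by (simp add: induced_map_lcoset)
  show "inj_on (L.coset_map fr) (lquot F Nf (fr \<inter> Nf))"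
    using lsubspace_Nf lsubspace_fr by (rule L.inj_on_coset_map)
  show "L.coset_map fr ` lquot F Nf (fr \<inter> Nf) =
    {C \<in> schur_lie F G \<pi>. L.coset_map fs C = lcoset F fs (lzero F)}"
    unfolding schur_lie_def
    using lsubspace_Nf lsubspace_fr lsubspace_fs _ _ Nf_subset_fs fr_subset_fs fs_subset_sum
  proof (rule L.coset_map_image_eq_kernel)
    show "Nf \<subseteq> r \<inter> ff"
      using lie_central Nf_subset_ff by blast
  qed (use r_subset in blast)
  show "L.coset_map fs ` schur_lie F G \<pi> =
    {C \<in> schur_lie F (quot_alg G I) (\<lambda>x. lcoset G I (\<pi> x)). induced_map \<pi> C = lzero G}"
    unfolding schur_lie_def
    using lsubspace_fr lsubspace_fs fr_subset_fs fs_subset_r _ _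
  proof (rule coset_map_image_eq_induced_kernel)
    show "r \<inter> ff = s \<inter> ff \<inter> r"
      using r_subset_s by blast
  qed (use s_subset in blast)
  have "\<pi> ` (s \<inter> ff) = I"
    using N_subset_s N_subset_derived image_N unfolding s_eq by blast
  then show "induced_map \<pi> ` schur_lie F (quot_alg G I) (\<lambda>x. lcoset G I (\<pi> x)) = I"
    unfolding schur_lie_def using lsubspace_fs fs_subset_r s_subset
    by (subst induced_map_image) blast+
qed

end


lemma (in leibniz_hom) lie_central_quotient_lie_lcs:
  assumes surj: "h ` lcar L = lcar M" and k: "2 \<le> k" and nil: "lie_lcs M (k + 1) = {lzero M}"
  shows "lie_central_quotient L M h (lie_lcs L k) (lie_lcs M k)"
proof -
  have lcs_Suc: "lie_br L (lie_lcs L k) (lcar L) = lie_lcs L (k + 1)"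
    using k by (simp add: lie_lcs_Suc)
  have "lie_lcs L k \<subseteq> lie_lcs L 2"
    using k by (rule L.lie_lcs_antimono)
  also have "lie_lcs L 2 = lie_br L (lcar L) (lcar L)"
    using lie_lcs_Suc[of 1 L] by (simp add: lie_lcs_def)
  finally have derived: "lie_lcs L k \<subseteq> lie_br L (lcar L) (lcar L)" .
  have "h ` lie_lcs L (k + 1) = {lzero M}"
    using surj nil by (simp add: image_lie_lcs)
  then have central: "lie_br L (lie_lcs L k) (lcar L) \<subseteq> lkernel L M h"
    unfolding lcs_Suc lkernel_def using L.lideal_subset[OF L.lideal_lie_lcs] by blast
  show ?thesis
  proof unfold_locales
    show "h ` lie_lcs L k = lie_lcs M k"
      using surj by (rule image_lie_lcs)
  qed (fact surj derived central L.lideal_lie_lcs M.lideal_lie_lcs)+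
qed

theorem mainTheorem7:
  fixes F :: "('k::field, 'v) leib" and G :: "('k, 'w) leib" and \<pi> :: "'v \<Rightarrow> 'w" and k :: nat
  assumes half: "(2::'k) \<noteq> 0"
    and G_alg: "leibniz_algebra G"
    and nil: "lie_nilpotent_class G k" and k2: "k \<ge> 2"
    and pres: "free_presentation F G \<pi>"
  shows "let r = lkernel F G \<pi>;
             fr = lie_br F (lcar F) r;
             Q = quot_alg G (lie_lcs G k);
             \<pi>Q = (\<lambda>x. lcoset G (lie_lcs G k) (\<pi> x));
             s = lkernel F Q \<pi>Q;
             fs = lie_br F (lcar F) s;
             A = lquot F (lie_lcs F (k + 1)) (fr \<inter> lie_lcs F (k + 1));
             MG = schur_lie F G \<pi>;
             MQ = schur_lie F Q \<pi>Q
         in free_presentation F Q \<pi>Q \<and>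
            (\<exists>\<Phi>1 \<Phi>2 \<Phi>3.
               (\<forall>x\<in>lie_lcs F (k + 1). \<Phi>1 (lcoset F (fr \<inter> lie_lcs F (k + 1)) x) = lcoset F fr x) \<and>
               (\<forall>x\<in>r \<inter> lie_br F (lcar F) (lcar F). \<Phi>2 (lcoset F fr x) = lcoset F fs x) \<and>
               (\<forall>x\<in>s \<inter> lie_br F (lcar F) (lcar F). \<Phi>3 (lcoset F fs x) = \<pi> x) \<and>
               inj_on \<Phi>1 A \<and>
               \<Phi>1 ` A = {C \<in> MG. \<Phi>2 C = lcoset F fs (lzero F)} \<and>
               \<Phi>2 ` MG = {C \<in> MQ. \<Phi>3 C = lzero G} \<and>
               \<Phi>3 ` MQ = lie_lcs G k)"
proof -
  have F_alg: "leibniz_algebra F" and hom: "leib_hom F G \<pi>" and surj: "\<pi> ` lcar F = lcar G"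
    using pres unfolding free_presentation_def by blast+
  interpret \<pi>: leibniz_hom F G \<pi>
    using F_alg G_alg hom by unfold_locales
  interpret lie_central_quotient F G \<pi> "lie_lcs F k" "lie_lcs G k"
    using surj k2 nil unfolding lie_nilpotent_class_def by (blast intro: \<pi>.lie_central_quotient_lie_lcs)
  have lcs_Suc: "lie_br F (lie_lcs F k) (lcar F) = lie_lcs F (k + 1)"
    using k2 by (simp add: lie_lcs_Suc)
  have presQ: "free_presentation F (quot_alg G (lie_lcs G k)) (\<lambda>x. lcoset G (lie_lcs G k) (\<pi> x))"
    using pres \<pi>.M.lideal_lie_lcs by (rule free_presentation_quot_alg)
  show ?thesis
    unfolding Let_def
    by (rule conjI[OF presQ], intro exI, fact schur_lie_exact_sequence[unfolded lcs_Suc])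
qed

end
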